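(* Let $m\ge1$ and let $\mathcal{Y}$ be a subset of the group $\mathbb{U}_m(\mathbb{Q})$ of upper unitriangular $m\times m$ rational matrices such that the heights of the matrices in $\mathcal{Y}$ are bounded by a constant. Let $s_1:=\min\{d\in\mathbb{Z}_{>0}: dY\text{ has integer entries for all }Y\in\mathcal{Y}\}$. Then for any positive integer $t$ and any $Y_1,\dots,Y_t\in\mathcal{Y}$, the matrix $s_1^{m-1}Y_1\cdots Y_t$ has integer entries.
   Context: Upper unitriangular means upper triangular with all diagonal entries equal to $1$. The height of a rational matrix is the maximum of the naive heights $\max(|p|,|q|)$ of its entries $p/q$ in lowest terms. *)

theory Defs
  imports "Jordan_Normal_Form.Matrix"
begin

definition upper_unitriangular :: "nat \<Rightarrow> rat mat \<Rightarrow> bool" where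
  "upper_unitriangular m Y \<longleftrightarrow> Y \<in> carrier_mat m m \<and>
     (\<forall>i<m. Y $$ (i,i) = 1) \<and> (\<forall>i<m. \<forall>j<i. Y $$ (i,j) = 0)"

definition rat_height :: "rat \<Rightarrow> int" where
  "rat_height x = (case quotient_of x of (p, q) \<Rightarrow> max \<bar>p\<bar> \<bar>q\<bar>)"

definition mat_height :: "rat mat \<Rightarrow> int" where
  "mat_height Y = Max {rat_height (Y $$ (i,j)) | i j. i < dim_row Y \<and> j < dim_col Y}"

definition integral_mat :: "rat mat \<Rightarrow> bool" where
  "integral_mat Y \<longleftrightarrow> (\<forall>i<dim_row Y. \<forall>j<dim_col Y. Y $$ (i,j) \<in> \<int>)"

definition mat_prod_list :: "nat \<Rightarrow> rat mat list \<Rightarrow> rat mat" where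
  "mat_prod_list m Ys = foldr (\<lambda>A B. A * B) Ys (1\<^sub>m m)"

end

theory Submission
  imports Defs
begin

text \<open>Call an upper triangular matrix \<open>s\<close>-graded if its entries on the \<open>k\<close>-th superdiagonal
  become integral after multiplication by \<open>s\<^sup>k\<close>. Since \<open>(k - i) + (j - k) = j - i\<close>, the
  \<open>s\<close>-graded matrices are closed under multiplication. A unitriangular \<open>Y\<close> with \<open>s Y\<close> integral
  is \<open>s\<close>-graded, because its nonzero off-diagonal entries lie on superdiagonals \<open>k \<ge> 1\<close>; and an
  \<open>s\<close>-graded \<open>m \<times> m\<close> matrix has only superdiagonals \<open>k \<le> m - 1\<close>, so multiplying it by
  \<open>s\<^sup>m\<^sup>-\<^sup>1\<close> makes it integral. Bounded height is needed only for \<open>s\<^sub>1\<close> to exist: all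
  denominators are at most \<open>C\<close>, so \<open>C!\<close> is a common denominator.\<close>

lemma rat_height_le_mat_height:
  assumes "i < dim_row Y" "j < dim_col Y"
  shows "rat_height (Y $$ (i,j)) \<le> mat_height Y"
proof -
  have "{rat_height (Y $$ (i,j)) | i j. i < dim_row Y \<and> j < dim_col Y}
      = (\<lambda>(i,j). rat_height (Y $$ (i,j))) ` ({..<dim_row Y} \<times> {..<dim_col Y})"
    by auto
  then show ?thesis
    unfolding mat_height_def using assms by (intro Max_ge) auto
qed

lemma rat_denom_le_height: "snd (quotient_of x) \<le> rat_height x"
  by (auto simp: rat_height_def le_max_iff_disj split: prod.split)

lemma of_int_mult_rat_Ints_if_denom_dvd:
  assumes "snd (quotient_of x) dvd d"
  shows "of_int d * x \<in> \<int>"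
proof -
  obtain p q where pq: "quotient_of x = (p, q)" by fastforce
  from assms pq obtain r where "d = q * r" by (auto elim: dvdE)
  moreover have "q > 0" "x = of_int p / of_int q"
    using quotient_of_denom_pos[OF pq] quotient_of_div[OF pq] by auto
  ultimately have "of_int d * x = of_int (r * p)" by simp
  then show ?thesis by simp
qed

lemma fact_mult_rat_Ints_if_height_le:
  assumes "rat_height x \<le> C"
  shows "of_nat (fact (nat C)) * x \<in> \<int>"
proof -
  have q: "snd (quotient_of x) > 0" by (rule quotient_of_denom_pos')
  with assms rat_denom_le_height[of x] have "nat (snd (quotient_of x)) dvd fact (nat C)"
    by (intro dvd_fact) auto
  with q have "snd (quotient_of x) dvd int (fact (nat C))"
    by (metis int_dvd_int_iff int_nat_eq less_le_not_le)
  from of_int_mult_rat_Ints_if_denom_dvd[OF this] show ?thesis by simp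
qed

lemma integral_mat_fact_smult_if_height_le:
  assumes "mat_height Y \<le> C"
  shows "integral_mat (of_nat (fact (nat C)) \<cdot>\<^sub>m Y)"
  unfolding integral_mat_def
proof (intro allI impI)
  fix i j
  assume "i < dim_row (of_nat (fact (nat C)) \<cdot>\<^sub>m Y)" "j < dim_col (of_nat (fact (nat C)) \<cdot>\<^sub>m Y)"
  then have ij: "i < dim_row Y" "j < dim_col Y" by auto
  with assms rat_height_le_mat_height have "rat_height (Y $$ (i,j)) \<le> C" by fastforce
  from fact_mult_rat_Ints_if_height_le[OF this] ij
  show "(of_nat (fact (nat C)) \<cdot>\<^sub>m Y) $$ (i,j) \<in> \<int>" by simp
qed

definition graded_integral :: "nat \<Rightarrow> nat \<Rightarrow> 'a :: comm_ring_1 mat \<Rightarrow> bool" where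
  "graded_integral m s A \<longleftrightarrow> A \<in> carrier_mat m m \<and> upper_triangular A \<and>
     (\<forall>i j. i \<le> j \<longrightarrow> j < m \<longrightarrow> of_nat (s ^ (j - i)) * A $$ (i,j) \<in> \<int>)"

lemma graded_integralD:
  assumes "graded_integral m s A"
  shows "A \<in> carrier_mat m m"
    and "j < i \<Longrightarrow> i < m \<Longrightarrow> A $$ (i,j) = 0"
    and "i \<le> j \<Longrightarrow> j < m \<Longrightarrow> of_nat (s ^ (j - i)) * A $$ (i,j) \<in> \<int>"
  using assms by (auto simp: graded_integral_def)

lemma graded_integral_one: "graded_integral m s (1\<^sub>m m)"
  by (auto simp: graded_integral_def)

lemma graded_integral_mult:
  assumes A: "graded_integral m s A" and B: "graded_integral m s B"
  shows "graded_integral m s (A * B)"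
proof -
  note A' = graded_integralD[OF A] and B' = graded_integralD[OF B]
  have entry: "(A * B) $$ (i,j) = (\<Sum>k<m. A $$ (i,k) * B $$ (k,j))" if "i < m" "j < m" for i j
    using that A'(1) B'(1) by (simp add: scalar_prod_def lessThan_atLeast0)
  have vanish: "A $$ (i,k) * B $$ (k,j) = 0" if "k < i \<or> j < k" "i < m" "k < m" for i j k
    using that A'(2) B'(2) by auto
  have "upper_triangular (A * B)"
  proof
    fix i j assume "j < i" "i < dim_row (A * B)"
    with A'(1) show "(A * B) $$ (i,j) = 0" by (auto simp: entry intro!: sum.neutral vanish)
  qed
  moreover have "of_nat (s ^ (j - i)) * (A * B) $$ (i,j) \<in> \<int>" if ij: "i \<le> j" "j < m" for i j
  proof -
    have "of_nat (s ^ (j - i)) * A $$ (i,k) * B $$ (k,j) \<in> \<int>" if k: "k < m" for k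
    proof (cases "k < i \<or> j < k")
      case True
      with vanish ij k show ?thesis by (simp add: mult.assoc)
    next
      case False
      then have "s ^ (j - i) = s ^ (k - i) * s ^ (j - k)"
        by (simp flip: power_add)
      then have "of_nat (s ^ (j - i)) * A $$ (i,k) * B $$ (k,j)
          = (of_nat (s ^ (k - i)) * A $$ (i,k)) * (of_nat (s ^ (j - k)) * B $$ (k,j))"
        by (simp add: ac_simps)
      with False ij k A'(3) B'(3) show ?thesis by simp
    qed
    with ij show ?thesis
      by (auto simp: entry sum_distrib_left mult.assoc)
  qed
  ultimately show ?thesis
    using A'(1) B'(1) by (simp add: graded_integral_def)
qed

lemma graded_integral_mat_prod_list:
  assumes "\<forall>Y\<in>set Ys. graded_integral m s Y"
  shows "graded_integral m s (mat_prod_list m Ys)"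
  using assms
  by (induction Ys) (simp_all add: mat_prod_list_def graded_integral_one graded_integral_mult)

lemma graded_integral_if_upper_unitriangular:
  assumes Y: "upper_unitriangular m Y" and sY: "integral_mat (of_nat s \<cdot>\<^sub>m Y)"
  shows "graded_integral m s Y"
proof -
  have carrier: "Y \<in> carrier_mat m m" and diag: "\<forall>i<m. Y $$ (i,i) = 1"
    and lower: "\<forall>i<m. \<forall>j<i. Y $$ (i,j) = 0"
    using Y by (auto simp: upper_unitriangular_def)
  have "of_nat (s ^ (j - i)) * Y $$ (i,j) \<in> \<int>" if ij: "i \<le> j" "j < m" for i j
  proof (cases "i = j")
    case True
    with diag ij show ?thesis by simp
  next
    case False
    with ij have "j - i = Suc (j - i - 1)" by simp
    then have "s ^ (j - i) = s ^ (j - i - 1) * s"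
      by (metis power_Suc2)
    moreover have "of_nat s * Y $$ (i,j) \<in> \<int>"
      using sY ij carrier by (auto simp: integral_mat_def)
    ultimately show ?thesis
      by (simp add: mult.assoc)
  qed
  with carrier lower show ?thesis
    by (auto simp: graded_integral_def upper_triangular_def)
qed

lemma integral_mat_pow_smult_if_graded_integral:
  assumes A: "graded_integral m s A"
  shows "integral_mat (of_nat (s ^ (m - 1)) \<cdot>\<^sub>m A)"
  unfolding integral_mat_def
proof (intro allI impI)
  note A' = graded_integralD[OF A]
  fix i j
  assume "i < dim_row (of_nat (s ^ (m - 1)) \<cdot>\<^sub>m A)" "j < dim_col (of_nat (s ^ (m - 1)) \<cdot>\<^sub>m A)"
  with A'(1) have ij: "i < m" "j < m" by auto
  show "(of_nat (s ^ (m - 1)) \<cdot>\<^sub>m A) $$ (i,j) \<in> \<int>"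
  proof (cases "j < i")
    case True
    with A'(1,2) ij show ?thesis by simp
  next
    case False
    with ij have "s ^ (m - 1) = s ^ (m - 1 - (j - i)) * s ^ (j - i)"
      by (simp flip: power_add)
    with False ij A'(1,3) show ?thesis
      by (simp add: mult.assoc)
  qed
qed

theorem lemma8p3:
  fixes m :: nat and \<Y> :: "rat mat set" and C :: int
  assumes "m \<ge> 1"
    and "\<forall>Y\<in>\<Y>. upper_unitriangular m Y"
    and "\<forall>Y\<in>\<Y>. mat_height Y \<le> C"
  defines "s\<^sub>1 \<equiv> LEAST d::nat. d > 0 \<and> (\<forall>Y\<in>\<Y>. integral_mat (of_nat d \<cdot>\<^sub>m Y))"
  shows "\<forall>t::nat. \<forall>Ys. t > 0 \<longrightarrow> length Ys = t \<longrightarrow> set Ys \<subseteq> \<Y> \<longrightarrow>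
           integral_mat (of_nat (s\<^sub>1 ^ (m - 1)) \<cdot>\<^sub>m mat_prod_list m Ys)"
proof (intro allI impI)
  fix t Ys
  assume Ys: "set Ys \<subseteq> \<Y>"
  have "\<exists>d::nat. d > 0 \<and> (\<forall>Y\<in>\<Y>. integral_mat (of_nat d \<cdot>\<^sub>m Y))"
    using assms(3) integral_mat_fact_smult_if_height_le by (intro exI[of _ "fact (nat C)"]) auto
  then have "\<forall>Y\<in>\<Y>. integral_mat (of_nat s\<^sub>1 \<cdot>\<^sub>m Y)"
    unfolding s\<^sub>1_def by (rule LeastI2_ex) blast
  with assms(2) Ys have "\<forall>Y\<in>set Ys. graded_integral m s\<^sub>1 Y"
    by (auto intro: graded_integral_if_upper_unitriangular)
  then show "integral_mat (of_nat (s\<^sub>1 ^ (m - 1)) \<cdot>\<^sub>m mat_prod_list m Ys)"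
    by (intro integral_mat_pow_smult_if_graded_integral graded_integral_mat_prod_list)
qed

end
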